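(* Let $n\ge3$, $\emptyset\ne S\subseteq\{1,\dots,n-1\}$, $\mathfrak p\mathfrak p_n:=\sum_{i\in S}\mathfrak p_i\mathfrak p_n$. Then $$(1+\mathfrak p\mathfrak p_n)^*\cap(1+\mathfrak a_{n,s})^*=\begin{cases}\big(1+\sum_{|I|=s,\ I\in\mathcal J(\mathfrak p)}\mathfrak p_I\big)^*,& s=2,\dots,n-1,\\ (1+F_n)^*,& s=n.\end{cases}$$ In particular $(1+\mathfrak p\mathfrak p_n)^*\cap(1+\mathfrak a_{n,1})^*=(1+\mathfrak p\mathfrak p_n)^*\cap(1+\mathfrak a_{n,2})^*=(1+\mathfrak p\mathfrak p_n)^*$.
   Context: $K$ is a field. $\mathbb S_n$: $K$-algebra generated by $x_1,\dots,x_n,y_1,\dots,y_n$ with relations $y_ix_i=1$, $[x_i,y_j]=[x_i,x_j]=[y_i,y_j]=0$ ($i\ne j$). $e_i:=1-x_iy_i$; $\mathfrak p_i$ = ideal of $\mathbb S_n$ generated by $e_i$; $\mathfrak p_I:=\prod_{i\in I}\mathfrak p_i$; $\mathfrak a_{n,s}:=\sum_{|I|=s}\mathfrak p_I$; $F_n:=\mathfrak p_{\{1,\dots,n\}}$. $(1+\mathfrak b)^*$ = group of units of $\mathbb S_n$ lying in $1+\mathfrak b$. $\mathcal J(\mathfrak p):=\{J\subseteq\{1,\dots,n\}: n\in J,\ J\cap S\ne\emptyset\}$. *)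

theory Defs
  imports "HOL-Algebra.Ideal"
begin

text \<open>The Jacobson algebra S_n is realised as the monoid algebra over K of the
direct product of n copies of the bicyclic monoid: the monomial x^a y^b
(a, b multi-indices, variables indexed by 1..n) is the pair (a, b).
In one variable  x^a y^b * x^c y^d = x^(a + c - min b c) y^(b + d - min b c),
which encodes y x = 1; distinct variables commute.\<close>

type_synonym bmon = "(nat \<Rightarrow> nat) \<times> (nat \<Rightarrow> nat)"

definition bmul :: "bmon \<Rightarrow> bmon \<Rightarrow> bmon" where
  "bmul p q = ((\<lambda>i. fst p i + fst q i - min (snd p i) (fst q i)),
               (\<lambda>i. snd p i + snd q i - min (snd p i) (fst q i)))"

definition bmons :: "nat \<Rightarrow> bmon set" where
  "bmons n = {m. \<forall>i. (i < 1 \<or> n < i) \<longrightarrow> fst m i = 0 \<and> snd m i = 0}"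

definition Sn_carrier :: "nat \<Rightarrow> (bmon \<Rightarrow> 'k::field) set" where
  "Sn_carrier n = {f. finite {m. f m \<noteq> 0} \<and> (\<forall>m. f m \<noteq> 0 \<longrightarrow> m \<in> bmons n)}"

definition Sn_mult :: "(bmon \<Rightarrow> 'k::field) \<Rightarrow> (bmon \<Rightarrow> 'k) \<Rightarrow> bmon \<Rightarrow> 'k" where
  "Sn_mult f g = (\<lambda>m. \<Sum>pq \<in> {pq. f (fst pq) \<noteq> 0 \<and> g (snd pq) \<noteq> 0 \<and> bmul (fst pq) (snd pq) = m}.
                        f (fst pq) * g (snd pq))"

definition Sn_one :: "bmon \<Rightarrow> 'k::field" where
  "Sn_one = (\<lambda>m. if m = ((\<lambda>_. 0), (\<lambda>_. 0)) then 1 else 0)"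

definition Sn :: "nat \<Rightarrow> (bmon \<Rightarrow> 'k::field) ring" where
  "Sn n = \<lparr>carrier = Sn_carrier n, mult = Sn_mult, one = Sn_one,
           zero = (\<lambda>_. 0), add = (\<lambda>f g m. f m + g m)\<rparr>"

definition Sx :: "nat \<Rightarrow> bmon \<Rightarrow> 'k::field" where
  "Sx i = (\<lambda>m. if m = ((\<lambda>j. if j = i then 1 else 0), (\<lambda>_. 0)) then 1 else 0)"

definition Sy :: "nat \<Rightarrow> bmon \<Rightarrow> 'k::field" where
  "Sy i = (\<lambda>m. if m = ((\<lambda>_. 0), (\<lambda>j. if j = i then 1 else 0)) then 1 else 0)"

definition Se :: "nat \<Rightarrow> bmon \<Rightarrow> 'k::field" where
  "Se i = (\<lambda>m. Sn_one m - Sn_mult (Sx i) (Sy i) m)"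

definition pid :: "nat \<Rightarrow> nat \<Rightarrow> (bmon \<Rightarrow> 'k::field) set" where
  "pid n i = genideal (Sn n) {Se i}"

definition ideal_prod :: "('a, 'b) ring_scheme \<Rightarrow> 'a set \<Rightarrow> 'a set \<Rightarrow> 'a set" where
  "ideal_prod R I J = genideal R {a \<otimes>\<^bsub>R\<^esub> b | a b. a \<in> I \<and> b \<in> J}"

definition ideal_sum :: "('a, 'b) ring_scheme \<Rightarrow> 'a set set \<Rightarrow> 'a set" where
  "ideal_sum R \<I> = genideal R (\<Union>\<I>)"

definition pI :: "nat \<Rightarrow> nat set \<Rightarrow> (bmon \<Rightarrow> 'k::field) set" where
  "pI n I = foldr (\<lambda>i J. ideal_prod (Sn n) (pid n i) J) (sorted_list_of_set I) (carrier (Sn n))"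

definition a_ns :: "nat \<Rightarrow> nat \<Rightarrow> (bmon \<Rightarrow> 'k::field) set" where
  "a_ns n s = ideal_sum (Sn n) {pI n I | I. I \<subseteq> {1..n} \<and> card I = s}"

definition Fn :: "nat \<Rightarrow> (bmon \<Rightarrow> 'k::field) set" where
  "Fn n = pI n {1..n}"

definition one_plus_units :: "('a, 'b) ring_scheme \<Rightarrow> 'a set \<Rightarrow> 'a set" where
  "one_plus_units R b = {u \<in> Units R. \<exists>c \<in> b. u = \<one>\<^bsub>R\<^esub> \<oplus>\<^bsub>R\<^esub> c}"

definition ppn :: "nat \<Rightarrow> nat set \<Rightarrow> (bmon \<Rightarrow> 'k::field) set" where
  "ppn n S = ideal_sum (Sn n) {ideal_prod (Sn n) (pid n i) (pid n n) | i. i \<in> S}"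

definition Jp :: "nat \<Rightarrow> nat set \<Rightarrow> nat set set" where
  "Jp n S = {J. J \<subseteq> {1..n} \<and> n \<in> J \<and> J \<inter> S \<noteq> {}}"

end

theory Submission
  imports Defs
begin

text \<open>Cancelling the
  factors \<open>x\<^sub>i y\<^sub>i\<close>, \<open>i \<in> A\<close>, of monomials realises the projection \<open>S\<^sub>n \<rightarrow> S\<^sub>n / (e\<^sub>i : i \<in> A)\<close>,
  and \<open>p\<^sub>I\<close> is exactly the set of elements killed by the projections for the singletons
  \<open>{i}\<close>, \<open>i \<in> I\<close>. Consequently a sum of ideals \<open>p\<^sub>T\<close>, \<open>T \<in> \<T>\<close>, consists of the elements killed
  modulo \<open>(e\<^sub>i : i \<notin> B)\<close> for every \<open>B\<close> that contains no member of \<open>\<T>\<close>: multiplying by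
  \<open>x\<^sub>j\<^sup>k y\<^sub>j\<^sup>k\<close> or by \<open>1 - x\<^sub>j\<^sup>k y\<^sub>j\<^sup>k \<in> p\<^sub>j\<close> splits such an element coordinate by coordinate.
  Intersecting two such sums therefore amounts to intersecting the families of sets \<open>B\<close>
  that contain a member, and the lemma reduces to the fact that a set contains an
  \<open>s\<close>-element member of \<open>\<J>(p)\<close> iff it contains some \<open>{i, n}\<close>, \<open>i \<in> S\<close>, and some \<open>s\<close>-element
  subset. Finally \<open>(1 + a)\<^sup>* \<inter> (1 + b)\<^sup>* = (1 + a \<inter> b)\<^sup>*\<close> since \<open>c \<mapsto> 1 + c\<close> is injective.\<close>

section \<open>The algebra \<open>S\<^sub>n\<close>\<close>

abbreviation mon_one :: bmon where
  "mon_one \<equiv> ((\<lambda>_. 0), (\<lambda>_. 0))"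

abbreviation supp :: "(bmon \<Rightarrow> 'k::zero) \<Rightarrow> bmon set" where
  "supp f \<equiv> {m. f m \<noteq> 0}"

lemma bmul_assoc: "bmul (bmul p q) r = bmul p (bmul q r)"
  unfolding bmul_def by (auto simp: fun_eq_iff min_def)

lemma bmul_mon_one_left [simp]: "bmul mon_one p = p"
  unfolding bmul_def by (auto simp: fun_eq_iff)

lemma bmul_mon_one_right [simp]: "bmul p mon_one = p"
  unfolding bmul_def by (auto simp: fun_eq_iff)

lemma bmul_bmons: "p \<in> bmons n \<Longrightarrow> q \<in> bmons n \<Longrightarrow> bmul p q \<in> bmons n"
  unfolding bmul_def bmons_def by auto

lemma sum_fibres_weighted:
  fixes \<Phi> w :: "_ \<Rightarrow> 'a::comm_semiring_1"
  assumes "finite A" "finite X" "g ` A \<subseteq> X"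
  shows "(\<Sum>s\<in>X. \<Phi> s * (\<Sum>a\<in>A. if g a = s then w a else 0)) = (\<Sum>a\<in>A. \<Phi> (g a) * w a)"
proof -
  have "(\<Sum>s\<in>X. \<Phi> s * (\<Sum>a\<in>A. if g a = s then w a else 0))
      = (\<Sum>s\<in>X. \<Sum>a\<in>A. if g a = s then \<Phi> s * w a else 0)"
    by (simp add: sum_distrib_left if_distrib cong: if_cong)
  also have "\<dots> = (\<Sum>a\<in>A. \<Sum>s\<in>X. if g a = s then \<Phi> s * w a else 0)"
    by (rule sum.swap)
  also have "\<dots> = (\<Sum>a\<in>A. \<Phi> (g a) * w a)"
    using assms by (intro sum.cong refl) (subst sum.delta', auto)
  finally show ?thesis .
qed

lemma Sn_mult_eq_sum:
  assumes "finite A" "finite B" "supp f \<subseteq> A" "supp g \<subseteq> B"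
  shows "Sn_mult f g m = (\<Sum>pq\<in>A \<times> B. if bmul (fst pq) (snd pq) = m then f (fst pq) * g (snd pq) else 0)"
  unfolding Sn_mult_def
  by (rule sum.mono_neutral_cong_left) (use assms in \<open>auto intro: finite_subset\<close>)

lemma supp_Sn_mult:
  assumes "finite A" "finite B" "supp f \<subseteq> A" "supp g \<subseteq> B"
  shows "supp (Sn_mult f g) \<subseteq> (\<lambda>pq. bmul (fst pq) (snd pq)) ` (A \<times> B)"
proof
  fix m assume "m \<in> supp (Sn_mult f g)"
  then have "(\<Sum>pq\<in>A \<times> B. if bmul (fst pq) (snd pq) = m then f (fst pq) * g (snd pq) else 0) \<noteq> 0"
    using Sn_mult_eq_sum[OF assms] by simp
  then have "\<exists>pq\<in>A \<times> B. bmul (fst pq) (snd pq) = m"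
    by (rule contrapos_np) (auto intro: sum.neutral)
  then show "m \<in> (\<lambda>pq. bmul (fst pq) (snd pq)) ` (A \<times> B)" by force
qed

lemma sum_weighted_Sn_mult:
  assumes "finite A" "finite B" "supp f \<subseteq> A" "supp g \<subseteq> B"
    and "finite X" "(\<lambda>pq. bmul (fst pq) (snd pq)) ` (A \<times> B) \<subseteq> X"
  shows "(\<Sum>s\<in>X. \<Phi> s * Sn_mult f g s) = (\<Sum>p\<in>A. \<Sum>q\<in>B. \<Phi> (bmul p q) * (f p * g q))"
proof -
  have "(\<Sum>s\<in>X. \<Phi> s * Sn_mult f g s)
      = (\<Sum>pq\<in>A \<times> B. \<Phi> (bmul (fst pq) (snd pq)) * (f (fst pq) * g (snd pq)))"
    unfolding Sn_mult_eq_sum[OF assms(1-4)]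
    by (rule sum_fibres_weighted) (use assms in auto)
  then show ?thesis by (simp add: sum.cartesian_product')
qed

lemma Sn_mult_assoc:
  fixes f g h :: "bmon \<Rightarrow> 'k::field"
  assumes "finite (supp f)" "finite (supp g)" "finite (supp h)"
  shows "Sn_mult (Sn_mult f g) h = Sn_mult f (Sn_mult g h)"
proof
  fix m
  define A B C where "A = supp f" and "B = supp g" and "C = supp h"
  define AB BC where "AB = (\<lambda>pq. bmul (fst pq) (snd pq)) ` (A \<times> B)"
    and "BC = (\<lambda>pq. bmul (fst pq) (snd pq)) ` (B \<times> C)"
  have fin: "finite A" "finite B" "finite C" "finite AB" "finite BC"
    using assms by (auto simp: A_def B_def C_def AB_def BC_def)
  have supp_AB: "supp (Sn_mult f g) \<subseteq> AB"
    unfolding AB_def by (rule supp_Sn_mult) (use fin in \<open>auto simp: A_def B_def\<close>)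
  have supp_BC: "supp (Sn_mult g h) \<subseteq> BC"
    unfolding BC_def by (rule supp_Sn_mult) (use fin in \<open>auto simp: B_def C_def\<close>)
  have "Sn_mult (Sn_mult f g) h m
      = (\<Sum>s\<in>AB. \<Sum>r\<in>C. (if bmul s r = m then h r else 0) * Sn_mult f g s)"
    by (subst Sn_mult_eq_sum[of AB C]) (use fin supp_AB in \<open>auto simp: C_def sum.cartesian_product'
        intro!: sum.cong\<close>)
  also have "\<dots> = (\<Sum>r\<in>C. \<Sum>s\<in>AB. (if bmul s r = m then h r else 0) * Sn_mult f g s)"
    by (rule sum.swap)
  also have "\<dots> = (\<Sum>r\<in>C. \<Sum>p\<in>A. \<Sum>q\<in>B. (if bmul (bmul p q) r = m then h r else 0) * (f p * g q))"
    by (intro sum.cong refl sum_weighted_Sn_mult) (use fin in \<open>auto simp: A_def B_def AB_def\<close>)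
  also have "\<dots> = (\<Sum>p\<in>A. \<Sum>q\<in>B. \<Sum>r\<in>C. (if bmul (bmul p q) r = m then h r else 0) * (f p * g q))"
    by (subst sum.swap, rule sum.cong, simp, rule sum.swap)
  also have "\<dots> = (\<Sum>p\<in>A. \<Sum>q\<in>B. \<Sum>r\<in>C. (if bmul p (bmul q r) = m then f p else 0) * (g q * h r))"
    by (auto simp: bmul_assoc mult_ac intro!: sum.cong)
  also have "\<dots> = (\<Sum>p\<in>A. \<Sum>t\<in>BC. (if bmul p t = m then f p else 0) * Sn_mult g h t)"
    by (rule sum.cong, simp, subst sum_weighted_Sn_mult[where A=B and B=C])
       (use fin in \<open>auto simp: B_def C_def BC_def sum.cartesian_product'\<close>)
  also have "\<dots> = Sn_mult f (Sn_mult g h) m"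
    by (subst Sn_mult_eq_sum[of A BC]) (use fin supp_BC in \<open>auto simp: A_def sum.cartesian_product'
        intro!: sum.cong\<close>)
  finally show "Sn_mult (Sn_mult f g) h m = Sn_mult f (Sn_mult g h) m" .
qed

lemma Sn_simps [simp]:
  "carrier (Sn n) = Sn_carrier n" "mult (Sn n) = Sn_mult" "one (Sn n) = Sn_one"
  "zero (Sn n) = (\<lambda>_. 0)" "add (Sn n) = (\<lambda>f g m. f m + g m)"
  by (simp_all add: Sn_def)

lemma Sn_carrier_iff:
  "f \<in> Sn_carrier n \<longleftrightarrow> finite (supp f) \<and> (\<forall>m. f m \<noteq> 0 \<longrightarrow> m \<in> bmons n)"
  by (simp add: Sn_carrier_def)

lemma finite_supp_Sn_carrier: "f \<in> Sn_carrier n \<Longrightarrow> finite (supp f)"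
  by (simp add: Sn_carrier_def)

lemma Sn_carrier_bmons: "f \<in> Sn_carrier n \<Longrightarrow> f q \<noteq> 0 \<Longrightarrow> q \<in> bmons n"
  unfolding Sn_carrier_def by blast

lemma Sn_mult_closed:
  assumes "f \<in> Sn_carrier n" "g \<in> Sn_carrier n"
  shows "Sn_mult f g \<in> Sn_carrier n"
proof -
  have fin: "finite (supp f)" "finite (supp g)"
    using assms by (simp_all add: finite_supp_Sn_carrier)
  have sub: "supp (Sn_mult f g) \<subseteq> (\<lambda>pq. bmul (fst pq) (snd pq)) ` (supp f \<times> supp g)"
    by (rule supp_Sn_mult) (use fin in auto)
  have "m \<in> bmons n" if "Sn_mult f g m \<noteq> 0" for m
  proof -
    from sub that obtain p q where "f p \<noteq> 0" "g q \<noteq> 0" "m = bmul p q" by auto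
    with assms show ?thesis by (metis Sn_carrier_bmons bmul_bmons)
  qed
  with finite_subset[OF sub] fin show ?thesis by (auto simp: Sn_carrier_iff)
qed

lemma Sn_one_carrier: "Sn_one \<in> Sn_carrier n"
  by (auto simp: Sn_carrier_iff bmons_def Sn_one_def)

lemma Sn_zero_closed: "(\<lambda>_. 0) \<in> Sn_carrier n"
  by (simp add: Sn_carrier_iff)

lemma Sn_add_closed: "f \<in> Sn_carrier n \<Longrightarrow> g \<in> Sn_carrier n \<Longrightarrow> (\<lambda>m. f m + g m) \<in> Sn_carrier n"
proof -
  assume "f \<in> Sn_carrier n" "g \<in> Sn_carrier n"
  moreover have "supp (\<lambda>m. f m + g m) \<subseteq> supp f \<union> supp g" by auto
  ultimately show ?thesis unfolding Sn_carrier_iff by (auto intro: finite_subset)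
qed

lemma Sn_uminus_closed: "f \<in> Sn_carrier n \<Longrightarrow> (\<lambda>m. - f m) \<in> Sn_carrier n"
  unfolding Sn_carrier_iff by auto

lemma Sn_diff_closed: "f \<in> Sn_carrier n \<Longrightarrow> g \<in> Sn_carrier n \<Longrightarrow> (\<lambda>m. f m - g m) \<in> Sn_carrier n"
  using Sn_add_closed[OF _ Sn_uminus_closed, of f n g] by simp

lemma Sn_mult_one_left:
  assumes "finite (supp f)"
  shows "Sn_mult Sn_one f = (f :: bmon \<Rightarrow> 'k::field)"
proof
  fix m
  have "Sn_mult Sn_one f m = (\<Sum>pq\<in>{mon_one} \<times> supp f.
      if bmul (fst pq) (snd pq) = m then Sn_one (fst pq) * f (snd pq) else 0)"
    by (rule Sn_mult_eq_sum) (use assms in \<open>auto simp: Sn_one_def\<close>)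
  also have "\<dots> = f m"
    using assms by (subst sum.cartesian_product') (auto simp: Sn_one_def intro!: sum.cong)
  finally show "Sn_mult Sn_one f m = f m" .
qed

lemma Sn_mult_one_right:
  assumes "finite (supp f)"
  shows "Sn_mult f Sn_one = (f :: bmon \<Rightarrow> 'k::field)"
proof
  fix m
  have "Sn_mult f Sn_one m = (\<Sum>pq\<in>supp f \<times> {mon_one}.
      if bmul (fst pq) (snd pq) = m then f (fst pq) * Sn_one (snd pq) else 0)"
    by (rule Sn_mult_eq_sum) (use assms in \<open>auto simp: Sn_one_def\<close>)
  also have "\<dots> = f m"
    using assms by (subst sum.cartesian_product') (auto simp: Sn_one_def intro!: sum.cong)
  finally show "Sn_mult f Sn_one m = f m" .
qed

lemma Sn_mult_zero_right [simp]: "Sn_mult f (\<lambda>_. 0) = (\<lambda>_. 0::'k::field)"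
  by (simp add: Sn_mult_def fun_eq_iff)

lemma Sn_mult_add_left:
  fixes f g h :: "bmon \<Rightarrow> 'k::field"
  assumes "finite (supp f)" "finite (supp g)" "finite (supp h)"
  shows "Sn_mult (\<lambda>m. f m + g m) h = (\<lambda>m. Sn_mult f h m + Sn_mult g h m)"
  by (rule ext, subst (1 2 3) Sn_mult_eq_sum[where A="supp f \<union> supp g" and B="supp h"])
     (use assms in \<open>auto simp: sum.distrib[symmetric] distrib_right intro!: sum.cong\<close>)

lemma Sn_mult_add_right:
  fixes f g h :: "bmon \<Rightarrow> 'k::field"
  assumes "finite (supp f)" "finite (supp g)" "finite (supp h)"
  shows "Sn_mult h (\<lambda>m. f m + g m) = (\<lambda>m. Sn_mult h f m + Sn_mult h g m)"
  by (rule ext, subst (1 2 3) Sn_mult_eq_sum[where A="supp h" and B="supp f \<union> supp g"])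
     (use assms in \<open>auto simp: sum.distrib[symmetric] distrib_left intro!: sum.cong\<close>)

lemma Sn_mult_diff_left:
  fixes f g h :: "bmon \<Rightarrow> 'k::field"
  assumes "finite (supp f)" "finite (supp g)" "finite (supp h)"
  shows "Sn_mult (\<lambda>m. f m - g m) h = (\<lambda>m. Sn_mult f h m - Sn_mult g h m)"
  by (rule ext, subst (1 2 3) Sn_mult_eq_sum[where A="supp f \<union> supp g" and B="supp h"])
     (use assms in \<open>auto simp: sum_subtractf[symmetric] left_diff_distrib intro!: sum.cong\<close>)

lemma Sn_mult_diff_right:
  fixes f g h :: "bmon \<Rightarrow> 'k::field"
  assumes "finite (supp f)" "finite (supp g)" "finite (supp h)"
  shows "Sn_mult h (\<lambda>m. f m - g m) = (\<lambda>m. Sn_mult h f m - Sn_mult h g m)"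
  by (rule ext, subst (1 2 3) Sn_mult_eq_sum[where A="supp h" and B="supp f \<union> supp g"])
     (use assms in \<open>auto simp: sum_subtractf[symmetric] right_diff_distrib intro!: sum.cong\<close>)

lemma Sn_ring: "ring (Sn n :: (bmon \<Rightarrow> 'k::field) ring)"
proof (rule ringI)
  show "abelian_group (Sn n :: (bmon \<Rightarrow> 'k) ring)"
  proof (rule abelian_groupI, goal_cases)
    case (6 f)
    then show ?case by (intro bexI[of _ "\<lambda>m. - f m"]) (auto simp: Sn_uminus_closed)
  qed (simp_all add: Sn_add_closed Sn_zero_closed ac_simps)
  show "monoid (Sn n :: (bmon \<Rightarrow> 'k) ring)"
    by (rule monoidI) (auto simp: Sn_mult_closed Sn_one_carrier Sn_mult_assoc
        Sn_mult_one_left Sn_mult_one_right finite_supp_Sn_carrier)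
qed (auto simp: finite_supp_Sn_carrier Sn_mult_add_left Sn_mult_add_right)

lemma Sn_a_inv:
  assumes "f \<in> Sn_carrier n"
  shows "a_inv (Sn n) f = (\<lambda>m. - (f m :: 'k::field))"
proof -
  interpret ring "Sn n :: (bmon \<Rightarrow> 'k) ring" by (rule Sn_ring)
  show ?thesis by (rule minus_equality) (use assms in \<open>auto simp: Sn_uminus_closed\<close>)
qed

section \<open>Pushing coefficients along maps of monomials\<close>

definition push :: "(bmon \<Rightarrow> bmon) \<Rightarrow> (bmon \<Rightarrow> 'k::field) \<Rightarrow> bmon \<Rightarrow> 'k" where
  "push h f r = (\<Sum>p\<in>{p. f p \<noteq> 0 \<and> h p = r}. f p)"

lemma push_eq_sum:
  assumes "finite A" "supp f \<subseteq> A"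
  shows "push h f r = (\<Sum>p\<in>A. if h p = r then f p else 0)"
proof -
  have "push h f r = (\<Sum>p\<in>{p\<in>A. h p = r}. f p)"
    unfolding push_def by (rule sum.mono_neutral_left) (use assms in auto)
  also have "\<dots> = (\<Sum>p\<in>A. if h p = r then f p else 0)"
    using assms(1) by (rule sum.inter_filter)
  finally show ?thesis .
qed

lemma sum_weighted_push:
  assumes "finite A" "supp f \<subseteq> A" "finite X" "h ` A \<subseteq> X"
  shows "(\<Sum>s\<in>X. \<Phi> s * push h f s) = (\<Sum>p\<in>A. \<Phi> (h p) * (f p :: 'k::field))"
  unfolding push_eq_sum[OF assms(1,2)] by (rule sum_fibres_weighted) (use assms in auto)

lemma sum_comp_push_zero:
  assumes "push h f = (\<lambda>_. 0)" "finite A" "supp f \<subseteq> A"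
  shows "(\<Sum>p\<in>A. \<Phi> (h p) * (f p :: 'k::field)) = 0"
  using sum_weighted_push[of A f "h ` A" h \<Phi>] assms by simp

lemma push_zero [simp]: "push h (\<lambda>_. 0::'k::field) = (\<lambda>_. 0)"
  by (simp add: push_def fun_eq_iff)

lemma push_add:
  fixes f g :: "bmon \<Rightarrow> 'k::field"
  assumes "finite (supp f)" "finite (supp g)"
  shows "push h (\<lambda>m. f m + g m) = (\<lambda>r. push h f r + push h g r)"
  by (rule ext, subst (1 2 3) push_eq_sum[where A="supp f \<union> supp g"])
     (use assms in \<open>auto simp: sum.distrib[symmetric] intro!: sum.cong\<close>)

lemma push_uminus:
  fixes f :: "bmon \<Rightarrow> 'k::field"
  assumes "finite (supp f)"
  shows "push h (\<lambda>m. - f m) = (\<lambda>r. - push h f r)"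
  by (rule ext, subst (1 2) push_eq_sum[where A="supp f"])
     (use assms in \<open>auto simp: sum_negf[symmetric] intro!: sum.cong\<close>)

lemma push_diff:
  fixes f g :: "bmon \<Rightarrow> 'k::field"
  assumes "finite (supp f)" "finite (supp g)"
  shows "push h (\<lambda>m. f m - g m) = (\<lambda>r. push h f r - push h g r)"
  by (rule ext, subst (1 2 3) push_eq_sum[where A="supp f \<union> supp g"])
     (use assms in \<open>auto simp: sum_subtractf[symmetric] intro!: sum.cong\<close>)

lemma push_Sn_mult_right_zero:
  fixes f g :: "bmon \<Rightarrow> 'k::field"
  assumes "finite (supp f)" "finite (supp g)" "push h f = (\<lambda>_. 0)"
    and compat: "\<And>p q. h (bmul p (h q)) = h (bmul p q)"
  shows "push h (Sn_mult g f) = (\<lambda>_. 0)"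
proof
  fix r
  let ?AB = "(\<lambda>pq. bmul (fst pq) (snd pq)) ` (supp g \<times> supp f)"
  have supp_AB: "supp (Sn_mult g f) \<subseteq> ?AB"
    by (rule supp_Sn_mult) (use assms in auto)
  have "push h (Sn_mult g f) r = (\<Sum>s\<in>?AB. (if h s = r then 1 else 0) * Sn_mult g f s)"
    by (subst push_eq_sum[where A="?AB"]) (use assms supp_AB in \<open>auto intro!: sum.cong\<close>)
  also have "\<dots> = (\<Sum>p\<in>supp g. \<Sum>q\<in>supp f. (if h (bmul p q) = r then 1 else 0) * (g p * f q))"
    by (rule sum_weighted_Sn_mult) (use assms in auto)
  also have "\<dots> = (\<Sum>p\<in>supp g. g p * (\<Sum>q\<in>supp f. (\<lambda>s. if h (bmul p s) = r then 1 else 0) (h q) * f q))"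
    by (auto simp: compat sum_distrib_left mult_ac intro!: sum.cong)
  also have "\<dots> = 0"
    by (subst sum_comp_push_zero[OF assms(3)]) (use assms in auto)
  finally show "push h (Sn_mult g f) r = 0" .
qed

lemma push_Sn_mult_left_zero:
  fixes f g :: "bmon \<Rightarrow> 'k::field"
  assumes "finite (supp f)" "finite (supp g)" "push h f = (\<lambda>_. 0)"
    and compat: "\<And>p q. h (bmul (h p) q) = h (bmul p q)"
  shows "push h (Sn_mult f g) = (\<lambda>_. 0)"
proof
  fix r
  let ?AB = "(\<lambda>pq. bmul (fst pq) (snd pq)) ` (supp f \<times> supp g)"
  have supp_AB: "supp (Sn_mult f g) \<subseteq> ?AB"
    by (rule supp_Sn_mult) (use assms in auto)
  have "push h (Sn_mult f g) r = (\<Sum>s\<in>?AB. (if h s = r then 1 else 0) * Sn_mult f g s)"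
    by (subst push_eq_sum[where A="?AB"]) (use assms supp_AB in \<open>auto intro!: sum.cong\<close>)
  also have "\<dots> = (\<Sum>p\<in>supp f. \<Sum>q\<in>supp g. (if h (bmul p q) = r then 1 else 0) * (f p * g q))"
    by (rule sum_weighted_Sn_mult) (use assms in auto)
  also have "\<dots> = (\<Sum>q\<in>supp g. \<Sum>p\<in>supp f. (if h (bmul p q) = r then 1 else 0) * (f p * g q))"
    by (rule sum.swap)
  also have "\<dots> = (\<Sum>q\<in>supp g. g q * (\<Sum>p\<in>supp f. (\<lambda>s. if h (bmul s q) = r then 1 else 0) (h p) * f p))"
    by (auto simp: compat sum_distrib_left mult_ac intro!: sum.cong)
  also have "\<dots> = 0"
    by (subst sum_comp_push_zero[OF assms(3)]) (use assms in auto)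
  finally show "push h (Sn_mult f g) r = 0" .
qed

text \<open>\<open>cancel_on A\<close> cancels the factors \<open>x\<^sub>i y\<^sub>i\<close> of a monomial for \<open>i \<in> A\<close>, i.e. it is the
  quotient of the monoid by the relations \<open>x\<^sub>i y\<^sub>i = 1\<close>, \<open>i \<in> A\<close>; accordingly
  \<open>push (cancel_on A)\<close> plays the role of the projection \<open>S\<^sub>n \<rightarrow> S\<^sub>n / (e\<^sub>i : i \<in> A)\<close>.\<close>

definition cancel_on :: "nat set \<Rightarrow> bmon \<Rightarrow> bmon" where
  "cancel_on A p =
     ((\<lambda>i. if i \<in> A then fst p i - min (fst p i) (snd p i) else fst p i),
      (\<lambda>i. if i \<in> A then snd p i - min (fst p i) (snd p i) else snd p i))"

text \<open>Modulo \<open>x\<^sub>i y\<^sub>i = 1\<close> the \<open>i\<close>-th coordinate of a monomial is determined by this difference.\<close>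

definition exponent_diff :: "bmon \<Rightarrow> nat \<Rightarrow> int" where
  "exponent_diff p i = int (fst p i) - int (snd p i)"

lemma exponent_diff_bmul: "exponent_diff (bmul p q) i = exponent_diff p i + exponent_diff q i"
  by (simp add: exponent_diff_def bmul_def min_def)

lemma exponent_diff_cancel_on: "exponent_diff (cancel_on A p) i = exponent_diff p i"
  by (simp add: exponent_diff_def cancel_on_def min_def)

lemma cancel_on_notin [simp]:
  "i \<notin> A \<Longrightarrow> fst (cancel_on A p) i = fst p i" "i \<notin> A \<Longrightarrow> snd (cancel_on A p) i = snd p i"
  by (simp_all add: cancel_on_def)

lemma cancel_on_eqI:
  assumes "\<And>i. i \<in> A \<Longrightarrow> exponent_diff p i = exponent_diff q i"
    and "\<And>i. i \<notin> A \<Longrightarrow> fst p i = fst q i \<and> snd p i = snd q i"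
  shows "cancel_on A p = cancel_on A q"
proof -
  have "fst (cancel_on A p) i = fst (cancel_on A q) i \<and> snd (cancel_on A p) i = snd (cancel_on A q) i"
    for i
  proof (cases "i \<in> A")
    case True
    then have "int (fst p i) - int (snd p i) = int (fst q i) - int (snd q i)"
      using assms(1) by (simp add: exponent_diff_def)
    with True show ?thesis by (simp add: cancel_on_def min_def) arith
  qed (use assms(2) in simp)
  then show ?thesis by (simp add: prod_eq_iff fun_eq_iff)
qed

lemma cancel_on_bmul_right: "cancel_on A (bmul p (cancel_on A q)) = cancel_on A (bmul p q)"
  by (rule cancel_on_eqI) (simp add: exponent_diff_bmul exponent_diff_cancel_on, simp add: bmul_def)

lemma cancel_on_bmul_left: "cancel_on A (bmul (cancel_on A p) q) = cancel_on A (bmul p q)"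
  by (rule cancel_on_eqI) (simp add: exponent_diff_bmul exponent_diff_cancel_on, simp add: bmul_def)

lemma cancel_on_cancel_on_singleton: "i \<in> A \<Longrightarrow> cancel_on A (cancel_on {i} p) = cancel_on A p"
  by (auto simp: cancel_on_def fun_eq_iff min_def)

section \<open>The ideals \<open>p\<^sub>I\<close>\<close>

definition cancel_kernel :: "nat \<Rightarrow> nat set set \<Rightarrow> (bmon \<Rightarrow> 'k::field) set" where
  "cancel_kernel n \<A> = {f \<in> Sn_carrier n. \<forall>A\<in>\<A>. push (cancel_on A) f = (\<lambda>_. 0)}"

lemma cancel_kernel_Un: "cancel_kernel n (\<A> \<union> \<B>) = cancel_kernel n \<A> \<inter> cancel_kernel n \<B>"
  by (auto simp: cancel_kernel_def)

lemma ideal_cancel_kernel: "ideal (cancel_kernel n \<A> :: (bmon \<Rightarrow> 'k::field) set) (Sn n)"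
proof (rule idealI[OF Sn_ring])
  show "subgroup (cancel_kernel n \<A> :: (bmon \<Rightarrow> 'k) set) (add_monoid (Sn n))"
  proof (rule subgroup.intro, goal_cases)
    case (4 f)
    then have "f \<in> Sn_carrier n" by (simp add: cancel_kernel_def)
    then have "inv\<^bsub>add_monoid (Sn n)\<^esub> f = (\<lambda>m. - f m)"
      using Sn_a_inv[of f n] by (simp add: a_inv_def)
    with 4 show ?case
      by (auto simp: cancel_kernel_def push_uminus finite_supp_Sn_carrier Sn_uminus_closed)
  qed (auto simp: cancel_kernel_def push_add finite_supp_Sn_carrier Sn_add_closed Sn_zero_closed)
next
  fix f g :: "bmon \<Rightarrow> 'k"
  assume "f \<in> cancel_kernel n \<A>" "g \<in> carrier (Sn n)"
  then show "g \<otimes>\<^bsub>Sn n\<^esub> f \<in> cancel_kernel n \<A>" "f \<otimes>\<^bsub>Sn n\<^esub> g \<in> cancel_kernel n \<A>"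
    by (auto simp: cancel_kernel_def Sn_mult_closed finite_supp_Sn_carrier
        cancel_on_bmul_right cancel_on_bmul_left
        intro: push_Sn_mult_right_zero push_Sn_mult_left_zero)
qed

definition pI_kernel :: "nat \<Rightarrow> nat set \<Rightarrow> (bmon \<Rightarrow> 'k::field) set" where
  "pI_kernel n I = cancel_kernel n ((\<lambda>i. {i}) ` I)"

lemma mem_pI_kernel_iff:
  "f \<in> pI_kernel n I \<longleftrightarrow> f \<in> Sn_carrier n \<and> (\<forall>i\<in>I. push (cancel_on {i}) f = (\<lambda>_. 0))"
  by (simp add: pI_kernel_def cancel_kernel_def)

lemma pI_kernel_empty: "pI_kernel n {} = Sn_carrier n"
  by (simp add: pI_kernel_def cancel_kernel_def)

lemma pI_kernel_insert: "pI_kernel n (insert i I) = pI_kernel n {i} \<inter> pI_kernel n I"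
  by (auto simp: mem_pI_kernel_iff)

lemma pI_kernel_antimono: "I \<subseteq> J \<Longrightarrow> pI_kernel n J \<subseteq> pI_kernel n I"
  by (auto simp: mem_pI_kernel_iff subset_iff)

lemma pI_kernel_subset_carrier: "pI_kernel n I \<subseteq> Sn_carrier n"
  by (auto simp: mem_pI_kernel_iff)

lemma ideal_pI_kernel: "ideal (pI_kernel n I :: (bmon \<Rightarrow> 'k::field) set) (Sn n)"
  unfolding pI_kernel_def by (rule ideal_cancel_kernel)

definition basis :: "bmon \<Rightarrow> bmon \<Rightarrow> 'k::field" where
  "basis p = (\<lambda>m. if m = p then 1 else 0)"

definition xy_pow :: "nat set \<Rightarrow> nat \<Rightarrow> bmon" where
  "xy_pow A k = ((\<lambda>i. if i \<in> A then k else 0), (\<lambda>i. if i \<in> A then k else 0))"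

lemma supp_basis [simp]: "supp (basis p :: bmon \<Rightarrow> 'k::field) = {p}"
  by (auto simp: basis_def)

lemma basis_carrier: "p \<in> bmons n \<Longrightarrow> basis p \<in> Sn_carrier n"
  by (auto simp: Sn_carrier_def basis_def)

lemma xy_pow_bmons: "A \<subseteq> {1..n} \<Longrightarrow> xy_pow A k \<in> bmons n"
  by (auto simp: bmons_def xy_pow_def)

lemma Sn_one_eq_basis: "Sn_one = basis mon_one"
  by (simp add: Sn_one_def basis_def fun_eq_iff)

lemma xy_pow_empty [simp]: "xy_pow {} k = mon_one"
  by (simp add: xy_pow_def)

lemma xy_pow_0 [simp]: "xy_pow A 0 = mon_one"
  by (simp add: xy_pow_def)

lemma bmul_xy_pow_disjoint: "A \<inter> B = {} \<Longrightarrow> bmul (xy_pow A k) (xy_pow B k) = xy_pow (A \<union> B) k"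
  by (auto simp: bmul_def xy_pow_def fun_eq_iff)

lemma cancel_on_xy_pow: "B \<subseteq> A \<Longrightarrow> cancel_on A (xy_pow B k) = mon_one"
  by (auto simp: cancel_on_def xy_pow_def fun_eq_iff)

lemma bmul_xy_pow_cancel_on:
  assumes "\<forall>i\<in>A. fst q i \<le> k"
  shows "bmul (xy_pow A k) (cancel_on A q) = bmul (xy_pow A k) q"
  using assms by (auto simp: bmul_def xy_pow_def cancel_on_def fun_eq_iff min_def)

lemma basis_mult: "Sn_mult (basis p) (basis q) = (basis (bmul p q) :: bmon \<Rightarrow> 'k::field)"
  by (rule ext, subst Sn_mult_eq_sum[where A="{p}" and B="{q}"]) (auto simp: basis_def)

lemma push_basis: "push h (basis p) = (basis (h p) :: bmon \<Rightarrow> 'k::field)"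
  by (auto simp: push_def basis_def fun_eq_iff)

lemma basis_mult_eq_push:
  assumes "finite (supp f)"
  shows "Sn_mult (basis p) f = push (bmul p) (f :: bmon \<Rightarrow> 'k::field)"
proof
  fix m
  have "Sn_mult (basis p) f m = (\<Sum>pq\<in>{p} \<times> supp f.
      if bmul (fst pq) (snd pq) = m then basis p (fst pq) * f (snd pq) else 0)"
    by (rule Sn_mult_eq_sum) (use assms in auto)
  also have "\<dots> = push (bmul p) f m"
    by (subst push_eq_sum[where A="supp f"])
       (use assms in \<open>auto simp: sum.cartesian_product' basis_def cong: if_cong\<close>)
  finally show "Sn_mult (basis p) f m = push (bmul p) f m" .
qed

lemma basis_mult_one_minus_basis:
  "Sn_mult (basis p) (\<lambda>m. Sn_one m - basis q m) = (\<lambda>m. basis p m - (basis (bmul p q) m :: 'k::field))"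
  by (subst Sn_mult_diff_right) (simp_all add: Sn_one_eq_basis basis_mult)

lemma one_minus_basis_mult_basis:
  "Sn_mult (\<lambda>m. Sn_one m - basis q m) (basis p) = (\<lambda>m. basis p m - (basis (bmul q p) m :: 'k::field))"
  by (subst Sn_mult_diff_left) (simp_all add: Sn_one_eq_basis basis_mult)

lemma exponents_bounded:
  assumes "f \<in> Sn_carrier n"
  obtains k where "\<And>q i. f q \<noteq> 0 \<Longrightarrow> fst q i \<le> k"
proof
  fix q i assume q: "f q \<noteq> 0"
  show "fst q i \<le> (\<Sum>q\<in>supp f. \<Sum>i\<le>n. fst q i)"
  proof (cases "i \<le> n")
    case True
    have "fst q i \<le> (\<Sum>i\<le>n. fst q i)" by (rule member_le_sum) (use True in auto)
    also have "\<dots> \<le> (\<Sum>q\<in>supp f. \<Sum>i\<le>n. fst q i)"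
      by (rule member_le_sum[where f="\<lambda>q. \<Sum>i\<le>n. fst q i"])
         (use q assms in \<open>auto simp: finite_supp_Sn_carrier\<close>)
    finally show ?thesis .
  next
    case False
    have "q \<in> bmons n" using assms q by (rule Sn_carrier_bmons)
    with False show ?thesis by (simp add: bmons_def)
  qed
qed

text \<open>Left multiplication by the product of the \<open>x\<^sub>i\<^sup>k y\<^sub>i\<^sup>k\<close>, \<open>i \<in> A\<close>, factors through \<open>cancel_on A\<close> on monomials
  whose \<open>x\<close>-exponents are at most \<open>k\<close>.\<close>

lemma xy_pow_mult_eq_zero:
  fixes f :: "bmon \<Rightarrow> 'k::field"
  assumes "finite (supp f)" "push (cancel_on A) f = (\<lambda>_. 0)"
    and bounded: "\<And>q i. f q \<noteq> 0 \<Longrightarrow> i \<in> A \<Longrightarrow> fst q i \<le> k"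
  shows "Sn_mult (basis (xy_pow A k)) f = (\<lambda>_. 0)"
proof
  fix r
  have "Sn_mult (basis (xy_pow A k)) f r
      = (\<Sum>q\<in>supp f. if bmul (xy_pow A k) q = r then f q else 0)"
    by (simp add: basis_mult_eq_push[OF assms(1)] push_eq_sum[OF assms(1)])
  also have "\<dots> = (\<Sum>q\<in>supp f. (\<lambda>s. if bmul (xy_pow A k) s = r then 1 else 0) (cancel_on A q) * f q)"
    by (rule sum.cong) (use bounded in \<open>auto simp: bmul_xy_pow_cancel_on\<close>)
  also have "\<dots> = 0"
    by (rule sum_comp_push_zero) (use assms in auto)
  finally show "Sn_mult (basis (xy_pow A k)) f r = 0" .
qed

lemma Se_eq: "Se i = (\<lambda>m. Sn_one m - (basis (xy_pow {i} 1) m :: 'k::field))"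
proof -
  have "Sn_mult (Sx i) (Sy i) = (basis (xy_pow {i} 1) :: bmon \<Rightarrow> 'k)"
    unfolding Sx_def Sy_def basis_def[symmetric] basis_mult
    by (rule arg_cong[where f=basis]) (auto simp: bmul_def xy_pow_def fun_eq_iff)
  then show ?thesis by (simp add: Se_def)
qed

lemma one_minus_xy_pow_carrier:
  "A \<subseteq> {1..n} \<Longrightarrow> (\<lambda>m. Sn_one m - (basis (xy_pow A k) m :: 'k::field)) \<in> Sn_carrier n"
  by (intro Sn_diff_closed Sn_one_carrier basis_carrier xy_pow_bmons)

lemma Se_in_pI_kernel:
  assumes "i \<in> {1..n}"
  shows "(Se i :: bmon \<Rightarrow> 'k::field) \<in> pI_kernel n {i}"
proof -
  have "Se i \<in> (Sn_carrier n :: (bmon \<Rightarrow> 'k) set)"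
    using assms by (simp add: Se_eq one_minus_xy_pow_carrier)
  moreover have "push (cancel_on {i}) (Se i :: bmon \<Rightarrow> 'k) = (\<lambda>_. 0)"
    by (simp add: Se_eq push_diff Sn_one_eq_basis push_basis cancel_on_xy_pow
        cancel_on_xy_pow[of "{}", simplified])
  ultimately show ?thesis by (simp add: mem_pI_kernel_iff)
qed

lemma ideal_pid: "i \<in> {1..n} \<Longrightarrow> ideal (pid n i :: (bmon \<Rightarrow> 'k::field) set) (Sn n)"
  unfolding pid_def
  by (rule ring.genideal_ideal[OF Sn_ring]) (simp add: Se_eq one_minus_xy_pow_carrier)

lemma Se_in_pid: "i \<in> {1..n} \<Longrightarrow> (Se i :: bmon \<Rightarrow> 'k::field) \<in> pid n i"
  unfolding pid_def
  by (rule ring.genideal_self'[OF Sn_ring]) (simp add: Se_eq one_minus_xy_pow_carrier)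

lemma pid_subset_pI_kernel: "i \<in> {1..n} \<Longrightarrow> (pid n i :: (bmon \<Rightarrow> 'k::field) set) \<subseteq> pI_kernel n {i}"
  unfolding pid_def
  by (rule ring.genideal_minimal[OF Sn_ring ideal_pI_kernel]) (simp add: Se_in_pI_kernel)

text \<open>Telescoping: \<open>1 - x\<^sup>k\<^sup>+\<^sup>1 y\<^sup>k\<^sup>+\<^sup>1 = (1 - x\<^sup>k y\<^sup>k) + x\<^sup>k e\<^sub>i y\<^sup>k\<close>.\<close>

lemma one_minus_xy_pow_in_pid:
  assumes i: "i \<in> {1..n}"
  shows "(\<lambda>m. Sn_one m - (basis (xy_pow {i} k) m :: 'k::field)) \<in> pid n i"
proof (induction k)
  case 0
  show ?case
    using additive_subgroup.zero_closed[OF ideal.axioms(1)[OF ideal_pid[OF i]]]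
    by (simp add: Sn_one_eq_basis)
next
  case (Suc k)
  define x_k :: bmon where "x_k = ((\<lambda>j. if j = i then k else 0), (\<lambda>_. 0))"
  define y_k :: bmon where "y_k = ((\<lambda>_. 0), (\<lambda>j. if j = i then k else 0))"
  have bmons: "x_k \<in> bmons n" "y_k \<in> bmons n"
    using i by (auto simp: x_k_def y_k_def bmons_def)
  have "bmul x_k y_k = xy_pow {i} k" "bmul (bmul x_k (xy_pow {i} 1)) y_k = xy_pow {i} (Suc k)"
    by (auto simp: x_k_def y_k_def bmul_def xy_pow_def fun_eq_iff)
  then have "Sn_mult (Sn_mult (basis x_k) (Se i)) (basis y_k)
      = (\<lambda>m. basis (xy_pow {i} k) m - (basis (xy_pow {i} (Suc k)) m :: 'k))"
    by (simp add: Se_eq basis_mult_one_minus_basis Sn_mult_diff_left basis_mult)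
  moreover have "Sn_mult (Sn_mult (basis x_k) (Se i)) (basis y_k) \<in> (pid n i :: (bmon \<Rightarrow> 'k) set)"
    using ideal.I_r_closed[OF ideal_pid[OF i] ideal.I_l_closed[OF ideal_pid[OF i] Se_in_pid[OF i]],
        of "basis x_k" "basis y_k"] bmons by (simp add: basis_carrier)
  ultimately have step: "(\<lambda>m. basis (xy_pow {i} k) m - (basis (xy_pow {i} (Suc k)) m :: 'k)) \<in> pid n i"
    by simp
  from additive_subgroup.a_closed[OF ideal.axioms(1)[OF ideal_pid[OF i]] Suc step]
  show ?case by simp
qed

lemma one_minus_xy_pow_mult_pI_kernel:
  assumes f: "f \<in> pI_kernel n {i}"
  obtains k where "Sn_mult (\<lambda>m. Sn_one m - basis (xy_pow {i} k) m) f = (f :: bmon \<Rightarrow> 'k::field)"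
proof -
  have carrier: "f \<in> Sn_carrier n" and killed: "push (cancel_on {i}) f = (\<lambda>_. 0)"
    using f by (auto simp: mem_pI_kernel_iff)
  obtain k where k: "\<And>q j. f q \<noteq> 0 \<Longrightarrow> fst q j \<le> k"
    using exponents_bounded[OF carrier] by blast
  have "Sn_mult (basis (xy_pow {i} k)) f = (\<lambda>_. 0)"
    by (rule xy_pow_mult_eq_zero) (use carrier killed k in \<open>auto simp: finite_supp_Sn_carrier\<close>)
  then have "Sn_mult (\<lambda>m. Sn_one m - basis (xy_pow {i} k) m) f = f"
    using finite_supp_Sn_carrier[OF carrier]
    by (simp add: Sn_mult_diff_left Sn_one_eq_basis Sn_mult_one_left[of f, unfolded Sn_one_eq_basis])
  then show ?thesis by (rule that)
qed

lemma pid_eq_pI_kernel: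
  assumes i: "i \<in> {1..n}"
  shows "(pid n i :: (bmon \<Rightarrow> 'k::field) set) = pI_kernel n {i}"
proof (intro equalityI subsetI)
  fix f :: "bmon \<Rightarrow> 'k" assume f: "f \<in> pI_kernel n {i}"
  obtain k where k: "Sn_mult (\<lambda>m. Sn_one m - basis (xy_pow {i} k) m) f = f"
    using one_minus_xy_pow_mult_pI_kernel[OF f] by blast
  have "f \<in> Sn_carrier n" using f by (simp add: mem_pI_kernel_iff)
  from ideal.I_r_closed[OF ideal_pid[OF i] one_minus_xy_pow_in_pid[OF i, of k] this[folded Sn_simps(1)]]
  show "f \<in> pid n i" by (simp only: Sn_simps k)
qed (use pid_subset_pI_kernel[OF i] in blast)

lemma ideal_prod_pid_pI_kernel:
  assumes i: "i \<in> {1..n}"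
  shows "ideal_prod (Sn n) (pid n i) (pI_kernel n J) = (pI_kernel n (insert i J) :: (bmon \<Rightarrow> 'k::field) set)"
proof -
  let ?G = "{a \<otimes>\<^bsub>Sn n\<^esub> b | a b. a \<in> (pid n i :: (bmon \<Rightarrow> 'k) set) \<and> b \<in> pI_kernel n J}"
  have generators: "?G \<subseteq> pI_kernel n (insert i J)"
  proof
    fix x assume "x \<in> ?G"
    then obtain a b where x: "x = a \<otimes>\<^bsub>Sn n\<^esub> b" and "a \<in> pid n i" and b: "b \<in> pI_kernel n J"
      by blast
    then have a: "a \<in> pI_kernel n {i}" using pid_subset_pI_kernel[OF i] by blast
    have "b \<in> carrier (Sn n)" using b pI_kernel_subset_carrier[of n J] by auto
    from ideal.I_r_closed[OF ideal_pI_kernel a this]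
    have "a \<otimes>\<^bsub>Sn n\<^esub> b \<in> pI_kernel n {i}" .
    moreover have "a \<in> carrier (Sn n)" using a pI_kernel_subset_carrier[of n "{i}"] by auto
    from ideal.I_l_closed[OF ideal_pI_kernel b this]
    have "a \<otimes>\<^bsub>Sn n\<^esub> b \<in> pI_kernel n J" .
    ultimately show "x \<in> pI_kernel n (insert i J)" by (simp add: x pI_kernel_insert[of n i J])
  qed
  show ?thesis
  proof
    show "ideal_prod (Sn n) (pid n i) (pI_kernel n J) \<subseteq> (pI_kernel n (insert i J) :: (bmon \<Rightarrow> 'k) set)"
      unfolding ideal_prod_def using ring.genideal_minimal[OF Sn_ring ideal_pI_kernel generators] by simp
    show "(pI_kernel n (insert i J) :: (bmon \<Rightarrow> 'k) set) \<subseteq> ideal_prod (Sn n) (pid n i) (pI_kernel n J)"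
    proof
      fix f :: "bmon \<Rightarrow> 'k" assume "f \<in> pI_kernel n (insert i J)"
      then have fi: "f \<in> pI_kernel n {i}" and fJ: "f \<in> pI_kernel n J"
        using pI_kernel_insert[of n i J] by blast+
      obtain k where k: "Sn_mult (\<lambda>m. Sn_one m - basis (xy_pow {i} k) m) f = f"
        using one_minus_xy_pow_mult_pI_kernel[OF fi] by blast
      have "f \<in> ?G"
        by (rule CollectI, rule exI[of _ "\<lambda>m. Sn_one m - basis (xy_pow {i} k) m"], rule exI[of _ f])
           (simp add: k one_minus_xy_pow_in_pid[OF i] fJ)
      moreover have "?G \<subseteq> carrier (Sn n)"
        using subset_trans[OF generators pI_kernel_subset_carrier] by simp
      then have "?G \<subseteq> ideal_prod (Sn n) (pid n i) (pI_kernel n J)"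
        unfolding ideal_prod_def by (rule ring.genideal_self[OF Sn_ring])
      ultimately show "f \<in> ideal_prod (Sn n) (pid n i) (pI_kernel n J)" by (rule subsetD[rotated])
    qed
  qed
qed

lemma pI_eq_pI_kernel:
  assumes "I \<subseteq> {1..n}"
  shows "pI n I = (pI_kernel n I :: (bmon \<Rightarrow> 'k::field) set)"
proof -
  have "foldr (\<lambda>i J. ideal_prod (Sn n) (pid n i) J) xs (carrier (Sn n))
      = (pI_kernel n (set xs) :: (bmon \<Rightarrow> 'k) set)" if "set xs \<subseteq> {1..n}" for xs
    using that by (induction xs) (simp_all add: pI_kernel_empty ideal_prod_pid_pI_kernel)
  moreover have "finite I" using assms finite_subset by blast
  ultimately show ?thesis using assms by (simp add: pI_def)
qed

section \<open>Sums of the ideals \<open>p\<^sub>I\<close>\<close>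

definition kernel_sum :: "nat \<Rightarrow> nat set set \<Rightarrow> (bmon \<Rightarrow> 'k::field) set" where
  "kernel_sum n \<T> = genideal (Sn n) (\<Union>T\<in>\<T>. pI_kernel n T)"

lemma Union_pI_kernel_subset_carrier:
  "(\<Union>T\<in>\<T>. pI_kernel n T :: (bmon \<Rightarrow> 'k::field) set) \<subseteq> carrier (Sn n)"
  unfolding Sn_simps by (intro UN_least pI_kernel_subset_carrier)

lemma ideal_kernel_sum: "ideal (kernel_sum n \<T> :: (bmon \<Rightarrow> 'k::field) set) (Sn n)"
  unfolding kernel_sum_def
  by (rule ring.genideal_ideal[OF Sn_ring Union_pI_kernel_subset_carrier])

lemma pI_kernel_subset_kernel_sum:
  assumes "T \<in> \<T>"
  shows "(pI_kernel n T :: (bmon \<Rightarrow> 'k::field) set) \<subseteq> kernel_sum n \<T>"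
proof -
  have "pI_kernel n T \<subseteq> (\<Union>T\<in>\<T>. pI_kernel n T :: (bmon \<Rightarrow> 'k) set)"
    using assms by blast
  also have "\<dots> \<subseteq> kernel_sum n \<T>"
    unfolding kernel_sum_def by (rule ring.genideal_self[OF Sn_ring Union_pI_kernel_subset_carrier])
  finally show ?thesis .
qed

lemma kernel_sum_singleton: "kernel_sum n {T} = (pI_kernel n T :: (bmon \<Rightarrow> 'k::field) set)"
proof
  show "kernel_sum n {T} \<subseteq> (pI_kernel n T :: (bmon \<Rightarrow> 'k) set)"
    unfolding kernel_sum_def
    using ring.genideal_minimal[OF Sn_ring ideal_pI_kernel, of "\<Union>T\<in>{T}. pI_kernel n T" n T] by simp
  show "(pI_kernel n T :: (bmon \<Rightarrow> 'k) set) \<subseteq> kernel_sum n {T}"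
    by (rule pI_kernel_subset_kernel_sum) simp
qed

lemma ideal_sum_pI_eq_kernel_sum:
  assumes "\<T> \<subseteq> Pow {1..n}"
  shows "ideal_sum (Sn n) {pI n I | I. I \<in> \<T>} = (kernel_sum n \<T> :: (bmon \<Rightarrow> 'k::field) set)"
proof -
  have "\<Union>{pI n I | I. I \<in> \<T>} = (\<Union>T\<in>\<T>. pI_kernel n T :: (bmon \<Rightarrow> 'k) set)"
    using pI_eq_pI_kernel assms by blast
  then show ?thesis by (simp add: ideal_sum_def kernel_sum_def)
qed

lemma push_cancel_on_eq_zero_mono:
  fixes f :: "bmon \<Rightarrow> 'k::field"
  assumes "finite (supp f)" "i \<in> A" "push (cancel_on {i}) f = (\<lambda>_. 0)"
  shows "push (cancel_on A) f = (\<lambda>_. 0)"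
proof
  fix r
  have "push (cancel_on A) f r
      = (\<Sum>p\<in>supp f. (\<lambda>s. if cancel_on A s = r then 1 else 0) (cancel_on {i} p) * f p)"
    by (subst push_eq_sum[OF assms(1)])
       (auto simp: cancel_on_cancel_on_singleton[OF assms(2)] intro!: sum.cong)
  also have "\<dots> = 0" by (rule sum_comp_push_zero[OF assms(3,1)]) simp
  finally show "push (cancel_on A) f r = 0" .
qed

text \<open>The elements vanishing in \<open>S\<^sub>n / (e\<^sub>i : i \<notin> B)\<close> for every \<open>B \<subseteq> {1..n}\<close> containing no
  member of \<open>\<T>\<close>. This description of the sum of the \<open>p\<^sub>T\<close>, \<open>T \<in> \<T>\<close>, turns intersections
  of such sums into combinatorics of \<open>\<T>\<close>.\<close>

definition avoid_kernel :: "nat \<Rightarrow> nat set set \<Rightarrow> (bmon \<Rightarrow> 'k::field) set" where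
  "avoid_kernel n \<T> = cancel_kernel n {{1..n} - B | B. B \<subseteq> {1..n} \<and> (\<forall>T\<in>\<T>. \<not> T \<subseteq> B)}"

lemma pI_kernel_subset_avoid_kernel:
  assumes "T \<in> \<T>" "T \<subseteq> {1..n}"
  shows "(pI_kernel n T :: (bmon \<Rightarrow> 'k::field) set) \<subseteq> avoid_kernel n \<T>"
proof
  fix f :: "bmon \<Rightarrow> 'k" assume f: "f \<in> pI_kernel n T"
  then have carrier: "f \<in> Sn_carrier n" by (simp add: mem_pI_kernel_iff)
  show "f \<in> avoid_kernel n \<T>"
    unfolding avoid_kernel_def cancel_kernel_def
  proof (intro CollectI conjI ballI carrier)
    fix A assume "A \<in> {{1..n} - B | B. B \<subseteq> {1..n} \<and> (\<forall>T\<in>\<T>. \<not> T \<subseteq> B)}"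
    then obtain B where A: "A = {1..n} - B" and avoid: "\<forall>T\<in>\<T>. \<not> T \<subseteq> B" by blast
    obtain i where i: "i \<in> T" "i \<notin> B" using avoid assms(1) by blast
    have "i \<in> A" using i assms(2) A by blast
    moreover have "push (cancel_on {i}) f = (\<lambda>_. 0)" using f i(1) by (simp add: mem_pI_kernel_iff)
    ultimately show "push (cancel_on A) f = (\<lambda>_. 0)"
      by (rule push_cancel_on_eq_zero_mono[OF finite_supp_Sn_carrier[OF carrier]])
  qed
qed

lemma kernel_sum_subset_avoid_kernel:
  assumes "\<T> \<subseteq> Pow {1..n}"
  shows "(kernel_sum n \<T> :: (bmon \<Rightarrow> 'k::field) set) \<subseteq> avoid_kernel n \<T>"
proof -
  have "(\<Union>T\<in>\<T>. pI_kernel n T :: (bmon \<Rightarrow> 'k) set) \<subseteq> avoid_kernel n \<T>"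
    using pI_kernel_subset_avoid_kernel assms by blast
  then show ?thesis
    unfolding kernel_sum_def avoid_kernel_def
    by (rule ring.genideal_minimal[OF Sn_ring ideal_cancel_kernel, folded avoid_kernel_def])
qed

lemma xy_pow_commute_one_minus_xy_pow:
  assumes "j \<notin> A"
  shows "Sn_mult (basis (xy_pow A k)) (\<lambda>m. Sn_one m - basis (xy_pow {j} k) m)
       = Sn_mult (\<lambda>m. Sn_one m - basis (xy_pow {j} k) m) (basis (xy_pow A k) :: bmon \<Rightarrow> 'k::field)"
proof -
  have "bmul (xy_pow A k) (xy_pow {j} k) = bmul (xy_pow {j} k) (xy_pow A k)"
    using assms bmul_xy_pow_disjoint[of A "{j}" k] bmul_xy_pow_disjoint[of "{j}" A k]
    by (simp add: Un_commute)
  then show ?thesis by (simp only: basis_mult_one_minus_basis one_minus_basis_mult_basis)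
qed

text \<open>Writing \<open>g = (1 - x\<^sub>j\<^sup>k y\<^sub>j\<^sup>k) g + x\<^sub>j\<^sup>k y\<^sub>j\<^sup>k g\<close> for \<open>j \<in> R\<close>, the first summand acquires \<open>j\<close> as a
  kernel index and the second is still annihilated by the remaining products; when \<open>R = {}\<close>,
  either \<open>g\<close> already lies in some \<open>p\<^sub>T\<close> or the hypothesis forces \<open>g = 0\<close>.\<close>

lemma kernel_sum_memI:
  fixes g :: "bmon \<Rightarrow> 'k::field"
  assumes "finite R" "R \<subseteq> {1..n}" "g \<in> pI_kernel n P"
    and "\<And>B. B \<subseteq> R \<Longrightarrow> \<forall>T\<in>\<T>. \<not> T \<subseteq> P \<union> B \<Longrightarrow> Sn_mult (basis (xy_pow (R - B) k)) g = (\<lambda>_. 0)"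
  shows "g \<in> kernel_sum n \<T>"
  using assms
proof (induction R arbitrary: P g rule: finite_induct)
  case empty
  show ?case
  proof (cases "\<exists>T\<in>\<T>. T \<subseteq> P")
    case True
    with empty.prems(2) pI_kernel_antimono pI_kernel_subset_kernel_sum show ?thesis by blast
  next
    case False
    with empty.prems(3)[of "{}"] have "Sn_mult (basis mon_one) g = (\<lambda>_. 0)" by simp
    moreover have "finite (supp g)"
      using empty.prems(2) by (auto simp: mem_pI_kernel_iff intro: finite_supp_Sn_carrier)
    ultimately have "g = \<zero>\<^bsub>Sn n\<^esub>" by (simp add: Sn_mult_one_left[of g, unfolded Sn_one_eq_basis])
    then show ?thesis
      using additive_subgroup.zero_closed[OF ideal.axioms(1)[OF ideal_kernel_sum]] by simp
  qed
next
  case (insert j R)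
  have j: "j \<in> {1..n}" and R: "R \<subseteq> {1..n}" using insert.prems(1) by auto
  have g: "g \<in> Sn_carrier n" using insert.prems(2) by (simp add: mem_pI_kernel_iff)
  define u :: "bmon \<Rightarrow> 'k" where "u = (\<lambda>m. Sn_one m - basis (xy_pow {j} k) m)"
  define v :: "bmon \<Rightarrow> 'k" where "v = basis (xy_pow {j} k)"
  have u: "u \<in> pI_kernel n {j}"
    unfolding u_def using one_minus_xy_pow_in_pid[OF j] pid_subset_pI_kernel[OF j] by blast
  then have u_carrier: "u \<in> Sn_carrier n" by (simp add: mem_pI_kernel_iff)
  have v_carrier: "v \<in> Sn_carrier n"
    unfolding v_def using j by (intro basis_carrier xy_pow_bmons) auto
  have fin: "finite (supp g)" "finite (supp u)" "finite (supp v)"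
    "\<And>A. finite (supp (basis (xy_pow A k) :: bmon \<Rightarrow> 'k))"
    using g u_carrier v_carrier by (simp_all add: finite_supp_Sn_carrier)
  have "Sn_mult u g = (\<lambda>m. Sn_mult Sn_one g m - Sn_mult v g m)"
    unfolding u_def v_def by (rule Sn_mult_diff_left) (simp_all add: Sn_one_eq_basis fin)
  then have split: "g = (\<lambda>m. Sn_mult u g m + Sn_mult v g m)"
    using Sn_mult_one_left[OF fin(1)] by (simp add: fun_eq_iff)
  have "Sn_mult u g \<in> kernel_sum n \<T>"
  proof (rule insert.IH)
    show "R \<subseteq> {1..n}" by (rule R)
    have "Sn_mult u g \<in> pI_kernel n {j}"
      using ideal.I_r_closed[OF ideal_pI_kernel u, of g] g by simp
    moreover have "Sn_mult u g \<in> pI_kernel n P"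
      using ideal.I_l_closed[OF ideal_pI_kernel insert.prems(2), of u] u_carrier by simp
    ultimately show "Sn_mult u g \<in> pI_kernel n (insert j P)"
      by (simp add: pI_kernel_insert[of n j P])
    fix B assume B: "B \<subseteq> R" and avoid: "\<forall>T\<in>\<T>. \<not> T \<subseteq> insert j P \<union> B"
    have "insert j R - insert j B = R - B" using insert.hyps(2) by blast
    then have zero: "Sn_mult (basis (xy_pow (R - B) k)) g = (\<lambda>_. 0)"
      using insert.prems(3)[of "insert j B"] B avoid by auto
    have "j \<notin> R - B" using insert.hyps(2) by blast
    have "Sn_mult (basis (xy_pow (R - B) k)) (Sn_mult u g)
        = Sn_mult (Sn_mult (basis (xy_pow (R - B) k)) u) g"
      by (rule Sn_mult_assoc[symmetric]) (use fin in auto)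
    also have "\<dots> = Sn_mult (Sn_mult u (basis (xy_pow (R - B) k))) g"
      unfolding u_def by (simp only: xy_pow_commute_one_minus_xy_pow[OF \<open>j \<notin> R - B\<close>])
    also have "\<dots> = Sn_mult u (Sn_mult (basis (xy_pow (R - B) k)) g)"
      by (rule Sn_mult_assoc) (use fin in auto)
    finally have "Sn_mult (basis (xy_pow (R - B) k)) (Sn_mult u g)
        = Sn_mult u (Sn_mult (basis (xy_pow (R - B) k)) g)" .
    then show "Sn_mult (basis (xy_pow (R - B) k)) (Sn_mult u g) = (\<lambda>_. 0)"
      by (simp add: zero)
  qed
  moreover have "Sn_mult v g \<in> kernel_sum n \<T>"
  proof (rule insert.IH)
    show "R \<subseteq> {1..n}" by (rule R)
    show "Sn_mult v g \<in> pI_kernel n P"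
      using ideal.I_l_closed[OF ideal_pI_kernel insert.prems(2), of v] v_carrier by simp
    fix B assume B: "B \<subseteq> R" and avoid: "\<forall>T\<in>\<T>. \<not> T \<subseteq> P \<union> B"
    have "bmul (xy_pow (R - B) k) (xy_pow {j} k) = xy_pow (insert j R - B) k"
    proof -
      have "insert j R - B = (R - B) \<union> {j}" using insert.hyps(2) B by blast
      then show ?thesis using bmul_xy_pow_disjoint[of "R - B" "{j}" k] insert.hyps(2) by simp
    qed
    have "Sn_mult (basis (xy_pow (R - B) k)) (Sn_mult v g)
        = Sn_mult (Sn_mult (basis (xy_pow (R - B) k)) v) g"
      by (rule Sn_mult_assoc[symmetric]) (use fin in auto)
    also have "\<dots> = Sn_mult (basis (xy_pow (insert j R - B) k)) g"
      unfolding v_def basis_mult by (simp only: \<open>bmul (xy_pow (R - B) k) (xy_pow {j} k) = _\<close>)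
    finally have "Sn_mult (basis (xy_pow (R - B) k)) (Sn_mult v g)
        = Sn_mult (basis (xy_pow (insert j R - B) k)) g" .
    then show "Sn_mult (basis (xy_pow (R - B) k)) (Sn_mult v g) = (\<lambda>_. 0)"
      using insert.prems(3)[of B] B avoid by auto
  qed
  ultimately have "Sn_mult u g \<oplus>\<^bsub>Sn n\<^esub> Sn_mult v g \<in> kernel_sum n \<T>"
    by (rule additive_subgroup.a_closed[OF ideal.axioms(1)[OF ideal_kernel_sum]])
  then show ?case by (subst split) simp
qed

lemma avoid_kernel_subset_kernel_sum: "(avoid_kernel n \<T> :: (bmon \<Rightarrow> 'k::field) set) \<subseteq> kernel_sum n \<T>"
proof
  fix f :: "bmon \<Rightarrow> 'k" assume f: "f \<in> avoid_kernel n \<T>"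
  then have carrier: "f \<in> Sn_carrier n" by (simp add: avoid_kernel_def cancel_kernel_def)
  obtain k where k: "\<And>q i. f q \<noteq> 0 \<Longrightarrow> fst q i \<le> k"
    using exponents_bounded[OF carrier] by blast
  have "Sn_mult (basis (xy_pow ({1..n} - B) k)) f = (\<lambda>_. 0)"
    if "B \<subseteq> {1..n}" "\<forall>T\<in>\<T>. \<not> T \<subseteq> {} \<union> B" for B
  proof (rule xy_pow_mult_eq_zero)
    have "{1..n} - B \<in> {{1..n} - B | B. B \<subseteq> {1..n} \<and> (\<forall>T\<in>\<T>. \<not> T \<subseteq> B)}"
      using that by auto
    with f show "push (cancel_on ({1..n} - B)) f = (\<lambda>_. 0)"
      unfolding avoid_kernel_def cancel_kernel_def by blast
  qed (use k finite_supp_Sn_carrier[OF carrier] in auto)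
  moreover have "f \<in> pI_kernel n {}" using carrier by (simp add: pI_kernel_empty)
  ultimately show "f \<in> kernel_sum n \<T>"
    by (intro kernel_sum_memI[where R="{1..n}" and P="{}"]) simp_all
qed

lemma kernel_sum_eq_avoid_kernel:
  "\<T> \<subseteq> Pow {1..n} \<Longrightarrow> (kernel_sum n \<T> :: (bmon \<Rightarrow> 'k::field) set) = avoid_kernel n \<T>"
  by (rule equalityI[OF kernel_sum_subset_avoid_kernel avoid_kernel_subset_kernel_sum])

lemma avoid_kernel_Int:
  assumes "\<And>B. B \<subseteq> {1..n} \<Longrightarrow> (\<exists>T\<in>\<T>. T \<subseteq> B) \<longleftrightarrow> (\<exists>T\<in>\<T>\<^sub>1. T \<subseteq> B) \<and> (\<exists>T\<in>\<T>\<^sub>2. T \<subseteq> B)"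
  shows "avoid_kernel n \<T>\<^sub>1 \<inter> avoid_kernel n \<T>\<^sub>2 = (avoid_kernel n \<T> :: (bmon \<Rightarrow> 'k::field) set)"
proof -
  define complements where
    "complements \<T>' = {{1..n} - B | B. B \<subseteq> {1..n} \<and> (\<forall>T\<in>\<T>'. \<not> T \<subseteq> B)}" for \<T>'
  have "complements \<T>\<^sub>1 \<union> complements \<T>\<^sub>2 = complements \<T>"
  proof (intro equalityI subsetI)
    fix A assume "A \<in> complements \<T>\<^sub>1 \<union> complements \<T>\<^sub>2"
    then obtain B where A: "A = {1..n} - B" and B: "B \<subseteq> {1..n}"
      and "(\<forall>T\<in>\<T>\<^sub>1. \<not> T \<subseteq> B) \<or> (\<forall>T\<in>\<T>\<^sub>2. \<not> T \<subseteq> B)"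
      unfolding complements_def by blast
    then have "\<forall>T\<in>\<T>. \<not> T \<subseteq> B" using assms[OF B] by blast
    with A B show "A \<in> complements \<T>"
      unfolding complements_def by (intro CollectI exI[of _ B]) simp
  next
    fix A assume "A \<in> complements \<T>"
    then obtain B where A: "A = {1..n} - B" and B: "B \<subseteq> {1..n}" and "\<forall>T\<in>\<T>. \<not> T \<subseteq> B"
      unfolding complements_def by blast
    then have "(\<forall>T\<in>\<T>\<^sub>1. \<not> T \<subseteq> B) \<or> (\<forall>T\<in>\<T>\<^sub>2. \<not> T \<subseteq> B)" using assms[OF B] by blast
    with A B show "A \<in> complements \<T>\<^sub>1 \<union> complements \<T>\<^sub>2"
      unfolding complements_def by blast
  qed
  then show ?thesis
    unfolding avoid_kernel_def complements_def[symmetric] cancel_kernel_Un[symmetric] by simp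
qed

lemma kernel_sum_Int:
  assumes "\<T> \<subseteq> Pow {1..n}" "\<T>\<^sub>1 \<subseteq> Pow {1..n}" "\<T>\<^sub>2 \<subseteq> Pow {1..n}"
    and "\<And>B. B \<subseteq> {1..n} \<Longrightarrow> (\<exists>T\<in>\<T>. T \<subseteq> B) \<longleftrightarrow> (\<exists>T\<in>\<T>\<^sub>1. T \<subseteq> B) \<and> (\<exists>T\<in>\<T>\<^sub>2. T \<subseteq> B)"
  shows "kernel_sum n \<T>\<^sub>1 \<inter> kernel_sum n \<T>\<^sub>2 = (kernel_sum n \<T> :: (bmon \<Rightarrow> 'k::field) set)"
proof -
  have "kernel_sum n \<T>\<^sub>1 \<inter> kernel_sum n \<T>\<^sub>2 = avoid_kernel n \<T>\<^sub>1 \<inter> (avoid_kernel n \<T>\<^sub>2 :: (bmon \<Rightarrow> 'k) set)"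
    by (simp only: kernel_sum_eq_avoid_kernel[OF assms(2)] kernel_sum_eq_avoid_kernel[OF assms(3)])
  also have "\<dots> = avoid_kernel n \<T>" by (rule avoid_kernel_Int[OF assms(4)])
  also have "\<dots> = kernel_sum n \<T>" by (rule kernel_sum_eq_avoid_kernel[OF assms(1), symmetric])
  finally show ?thesis .
qed

lemma kernel_sum_Int_absorb:
  assumes "\<T>\<^sub>1 \<subseteq> Pow {1..n}" "\<T>\<^sub>2 \<subseteq> Pow {1..n}" "\<And>T. T \<in> \<T>\<^sub>1 \<Longrightarrow> \<exists>T'\<in>\<T>\<^sub>2. T' \<subseteq> T"
  shows "kernel_sum n \<T>\<^sub>1 \<inter> kernel_sum n \<T>\<^sub>2 = (kernel_sum n \<T>\<^sub>1 :: (bmon \<Rightarrow> 'k::field) set)"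
proof (rule kernel_sum_Int[OF assms(1,1,2)])
  fix B
  have "\<exists>T'\<in>\<T>\<^sub>2. T' \<subseteq> B" if "T \<in> \<T>\<^sub>1" "T \<subseteq> B" for T
    using assms(3)[OF that(1)] that(2) by (meson order_trans)
  then show "(\<exists>T\<in>\<T>\<^sub>1. T \<subseteq> B) \<longleftrightarrow> (\<exists>T\<in>\<T>\<^sub>1. T \<subseteq> B) \<and> (\<exists>T\<in>\<T>\<^sub>2. T \<subseteq> B)" by blast
qed

lemma one_plus_units_Int:
  "one_plus_units (Sn n) X \<inter> one_plus_units (Sn n) Y = one_plus_units (Sn n) (X \<inter> Y :: (bmon \<Rightarrow> 'k::field) set)"
proof -
  have "c = c'" if "(\<lambda>m. Sn_one m + c m) = (\<lambda>m. Sn_one m + (c' m :: 'k))" for c c'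
    using that by (simp add: fun_eq_iff)
  then show ?thesis unfolding one_plus_units_def by auto
qed

lemma pairs_subset_Pow:
  fixes n :: nat
  assumes "S \<subseteq> {1..n}"
  shows "{{i, n} | i. i \<in> S} \<subseteq> Pow {1..n}"
proof
  fix T assume "T \<in> {{i, n} | i. i \<in> S}"
  then obtain i where "i \<in> S" "T = {i, n}" by blast
  with assms have "i \<in> {1..n}" "T = {i, n}" by blast+
  then show "T \<in> Pow {1..n}" by auto
qed

lemma ppn_eq_kernel_sum:
  assumes "S \<subseteq> {1..n}"
  shows "ppn n S = (kernel_sum n {{i, n} | i. i \<in> S} :: (bmon \<Rightarrow> 'k::field) set)"
proof -
  have prod: "ideal_prod (Sn n) (pid n i) (pid n n) = (pI_kernel n {i, n} :: (bmon \<Rightarrow> 'k) set)"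
    if "i \<in> S" for i
  proof -
    have i: "i \<in> {1..n}" using that assms by blast
    then have "pid n n = (pI_kernel n {n} :: (bmon \<Rightarrow> 'k) set)" by (intro pid_eq_pI_kernel) auto
    with ideal_prod_pid_pI_kernel[OF i, of "{n}"] show ?thesis by simp
  qed
  have "\<Union>{ideal_prod (Sn n) (pid n i) (pid n n) | i. i \<in> S}
      = (\<Union>T\<in>{{i, n} | i. i \<in> S}. pI_kernel n T :: (bmon \<Rightarrow> 'k) set)"
    using prod by blast
  then show ?thesis by (simp add: ppn_def ideal_sum_def kernel_sum_def)
qed

lemma ideal_sum_pI_Collect_eq_kernel_sum:
  "ideal_sum (Sn n) {pI n I | I. I \<subseteq> {1..n} \<and> P I}
     = (kernel_sum n {I. I \<subseteq> {1..n} \<and> P I} :: (bmon \<Rightarrow> 'k::field) set)"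
proof -
  have "{I. I \<subseteq> {1..n} \<and> P I} \<subseteq> Pow {1..n}" by blast
  from ideal_sum_pI_eq_kernel_sum[OF this] show ?thesis by simp
qed

lemma a_ns_eq_kernel_sum:
  "a_ns n s = (kernel_sum n {I. I \<subseteq> {1..n} \<and> card I = s} :: (bmon \<Rightarrow> 'k::field) set)"
  unfolding a_ns_def by (rule ideal_sum_pI_Collect_eq_kernel_sum)

lemma Fn_eq_kernel_sum: "Fn n = (kernel_sum n {{1..n}} :: (bmon \<Rightarrow> 'k::field) set)"
  by (simp add: Fn_def pI_eq_pI_kernel kernel_sum_singleton)

lemma card_subsets_eq_card: "{I. I \<subseteq> {1..n} \<and> card I = n} = {{1..n}}"
  using card_subset_eq[of "{1..n}"] by auto

lemma Jp_subset_iff: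
  assumes "2 \<le> s" "S \<subseteq> {1..n - 1}" "B \<subseteq> {1..n}"
  shows "(\<exists>T\<in>{I. I \<subseteq> {1..n} \<and> card I = s \<and> I \<in> Jp n S}. T \<subseteq> B)
     \<longleftrightarrow> (\<exists>T\<in>{{i, n} | i. i \<in> S}. T \<subseteq> B) \<and> (\<exists>T\<in>{I. I \<subseteq> {1..n} \<and> card I = s}. T \<subseteq> B)"
  (is "?lhs \<longleftrightarrow> ?rhs")
proof
  assume ?lhs
  then obtain I where I: "I \<subseteq> {1..n}" "card I = s" "I \<in> Jp n S" "I \<subseteq> B" by blast
  then obtain i where "i \<in> S" "{i, n} \<subseteq> I" unfolding Jp_def by blast
  with I have "{i, n} \<in> {{i, n} | i. i \<in> S}" "{i, n} \<subseteq> B" "I \<in> {I. I \<subseteq> {1..n} \<and> card I = s}"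
    by auto
  with I(4) show ?rhs by blast
next
  assume ?rhs
  \<comment> \<open>pad \<open>{i, n}\<close> with \<open>s - 2\<close> further elements of \<open>B\<close>\<close>
  then obtain i I where i: "i \<in> S" "{i, n} \<subseteq> B" and I: "I \<subseteq> B" "card I = s" by blast
  have fin: "finite B" using assms(3) finite_subset by blast
  have "i \<in> {1..n - 1}" using i(1) assms(2) by blast
  then have "i \<noteq> n" by auto
  have "s \<le> card B" using I card_mono[OF fin] by metis
  then have "s - 2 \<le> card (B - {i, n})"
    using i \<open>i \<noteq> n\<close> fin by (simp add: card_Diff_subset)
  then obtain J where J: "J \<subseteq> B - {i, n}" "card J = s - 2"
    using obtain_subset_with_card_n by metis
  have "finite J" "i \<notin> J" "n \<notin> J" using J(1) fin finite_subset by auto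
  then have "card (insert i (insert n J)) = Suc (Suc (card J))" using \<open>i \<noteq> n\<close> by simp
  then have "card (insert i (insert n J)) = s" using J(2) assms(1) by simp
  moreover have "insert i (insert n J) \<subseteq> B" using J i by blast
  moreover have "insert i (insert n J) \<in> Jp n S" using J i assms(3) unfolding Jp_def by blast
  ultimately show ?lhs using assms(3) by blast
qed

lemma ppn_Int_a_ns:
  assumes "S \<subseteq> {1..n - 1}" "2 \<le> s"
  shows "ppn n S \<inter> a_ns n s
    = (ideal_sum (Sn n) {pI n I | I. I \<subseteq> {1..n} \<and> card I = s \<and> I \<in> Jp n S} :: (bmon \<Rightarrow> 'k::field) set)"
proof -
  have S: "S \<subseteq> {1..n}" using assms(1) by (auto simp: subset_iff)
  show ?thesis
    unfolding ppn_eq_kernel_sum[OF S] a_ns_eq_kernel_sum ideal_sum_pI_Collect_eq_kernel_sum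
    by (rule kernel_sum_Int[OF _ pairs_subset_Pow[OF S]]) (blast, blast, rule Jp_subset_iff[OF assms(2,1)])
qed

lemma ppn_Int_a_ns_card_n:
  assumes "S \<noteq> {}" "S \<subseteq> {1..n}"
  shows "ppn n S \<inter> a_ns n n = (Fn n :: (bmon \<Rightarrow> 'k::field) set)"
proof -
  obtain i where "i \<in> S" using assms(1) by blast
  then have "{i, n} \<in> {{i, n} | i. i \<in> S}" "{i, n} \<subseteq> {1..n}" using assms(2) by auto
  then have "kernel_sum n {{1..n}} \<inter> kernel_sum n {{i, n} | i. i \<in> S}
      = (kernel_sum n {{1..n}} :: (bmon \<Rightarrow> 'k) set)"
    by (intro kernel_sum_Int_absorb pairs_subset_Pow[OF assms(2)]) blast+
  then show ?thesis
    unfolding ppn_eq_kernel_sum[OF assms(2)] a_ns_eq_kernel_sum card_subsets_eq_card Fn_eq_kernel_sum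
    by (simp only: Int_commute)
qed

lemma ppn_Int_a_ns_absorb:
  assumes "S \<subseteq> {1..n - 1}" "s \<in> {1, 2}"
  shows "ppn n S \<inter> a_ns n s = (ppn n S :: (bmon \<Rightarrow> 'k::field) set)"
proof -
  have S: "S \<subseteq> {1..n}" using assms(1) by (auto simp: subset_iff)
  show ?thesis
    unfolding ppn_eq_kernel_sum[OF S] a_ns_eq_kernel_sum
  proof (rule kernel_sum_Int_absorb[OF pairs_subset_Pow[OF S]])
    fix T assume "T \<in> {{i, n} | i. i \<in> S}"
    then obtain i where i: "i \<in> {1..n - 1}" "T = {i, n}" using assms(1) by blast
    then have "{i} \<in> {I. I \<subseteq> {1..n} \<and> card I = 1}" "T \<in> {I. I \<subseteq> {1..n} \<and> card I = 2}"
      by auto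
    with i(2) assms(2) show "\<exists>T'\<in>{I. I \<subseteq> {1..n} \<and> card I = s}. T' \<subseteq> T"
      by (elim insertE emptyE) blast+
  qed blast
qed

theorem lemma5p1:
  fixes n :: nat and S :: "nat set"
  assumes "n \<ge> 3" and "S \<noteq> {}" and "S \<subseteq> {1..n-1}"
  shows "(\<forall>s \<in> {2..n-1}.
            one_plus_units (Sn n) (ppn n S :: (bmon \<Rightarrow> 'k::field) set)
              \<inter> one_plus_units (Sn n) (a_ns n s)
            = one_plus_units (Sn n)
                (ideal_sum (Sn n) {pI n I | I. I \<subseteq> {1..n} \<and> card I = s \<and> I \<in> Jp n S}))
       \<and> one_plus_units (Sn n) (ppn n S :: (bmon \<Rightarrow> 'k::field) set) \<inter> one_plus_units (Sn n) (a_ns n n)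
            = one_plus_units (Sn n) (Fn n)
       \<and> one_plus_units (Sn n) (ppn n S :: (bmon \<Rightarrow> 'k::field) set) \<inter> one_plus_units (Sn n) (a_ns n 1)
            = one_plus_units (Sn n) (ppn n S)
       \<and> one_plus_units (Sn n) (ppn n S :: (bmon \<Rightarrow> 'k::field) set) \<inter> one_plus_units (Sn n) (a_ns n 2)
            = one_plus_units (Sn n) (ppn n S)"
proof -
  have S: "S \<subseteq> {1..n}" using assms(3) by (auto simp: subset_iff)
  have "ppn n S \<inter> a_ns n s
      = (ideal_sum (Sn n) {pI n I | I. I \<subseteq> {1..n} \<and> card I = s \<and> I \<in> Jp n S} :: (bmon \<Rightarrow> 'k) set)"
    if "s \<in> {2..n-1}" for s
    using that by (intro ppn_Int_a_ns assms(3)) simp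
  moreover have "ppn n S \<inter> a_ns n n = (Fn n :: (bmon \<Rightarrow> 'k) set)"
    by (rule ppn_Int_a_ns_card_n[OF assms(2) S])
  moreover have "ppn n S \<inter> a_ns n s = (ppn n S :: (bmon \<Rightarrow> 'k) set)" if "s \<in> {1, 2}" for s
    by (rule ppn_Int_a_ns_absorb[OF assms(3) that])
  ultimately show ?thesis by (simp add: one_plus_units_Int)
qed

end
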